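(* Let $C$ be a Clifford system of rank $m+1$ on $\mathbb{R}^{2l}$ with $l>m+1$. If the Clifford foliation $(\mathbb{S}^{2l-1},\mathcal{F}_C)$ is homogeneous, then the FKM isoparametric foliation $(\mathbb{S}^{2l-1},\mathcal{F}'_C)$ is homogeneous as well.
   Context: A Clifford system $C$ of rank $m+1$ ($m\ge1$) on $\mathbb{R}^{2l}$, with the standard inner product, is an $(m+1)$-dimensional linear subspace $\mathbb{R}_C$ of the symmetric endomorphisms of $\mathbb{R}^{2l}$. It must admit a basis $P_0,\dots,P_m$ with $P_i^2=\mathrm{Id}$ and $P_iP_j=-P_jP_i$ for $i\ne j$, orthonormal for $\langle A,B\rangle=\frac1{2l}\mathrm{tr}(AB)$. The map $\pi_C$ is $\pi_C(x)=\sum_i\langle P_ix,x\rangle P_i$ on $\mathbb{S}^{2l-1}$. The Clifford foliation $\mathcal{F}_C$ is the partition of $\mathbb{S}^{2l-1}$ into fibers of $\pi_C$. The FKM foliation $\mathcal{F}'_C$ is the partition of $\mathbb{S}^{2l-1}$ into the sets $\{x:\|\pi_C(x)\|=r\}$, $r\in[0,1]$. Equivalently, these are the level sets of $F(x)=1-2\sum_{i}\langle P_ix,x\rangle^2$. A foliation is homogeneous if its leaves are the orbits of an isometric action of a connected Lie group (here a closed subgroup of $\mathrm{SO}(2l)$). *)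

theory Defs
  imports "HOL-Analysis.Analysis"
begin

definition cl_inner :: "real^'n^'n \<Rightarrow> real^'n^'n \<Rightarrow> real" where
  "cl_inner A B = trace (A ** B) / real CARD('n)"

definition cl_norm :: "real^'n^'n \<Rightarrow> real" where
  "cl_norm A = sqrt (cl_inner A A)"

definition clifford_system :: "nat \<Rightarrow> (nat \<Rightarrow> real^'n^'n) \<Rightarrow> bool" where
  "clifford_system m P \<longleftrightarrow>
     (\<forall>i\<le>m. transpose (P i) = P i) \<and>
     (\<forall>i\<le>m. P i ** P i = mat 1) \<and>
     (\<forall>i\<le>m. \<forall>j\<le>m. i \<noteq> j \<longrightarrow> P i ** P j = - (P j ** P i)) \<and>
     (\<forall>i\<le>m. \<forall>j\<le>m. cl_inner (P i) (P j) = (if i = j then 1 else 0))"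

definition pi_C :: "nat \<Rightarrow> (nat \<Rightarrow> real^'n^'n) \<Rightarrow> real^'n \<Rightarrow> real^'n^'n" where
  "pi_C m P x = (\<Sum>i\<le>m. ((P i *v x) \<bullet> x) *\<^sub>R P i)"

definition clifford_leaf :: "nat \<Rightarrow> (nat \<Rightarrow> real^'n^'n) \<Rightarrow> real^'n \<Rightarrow> (real^'n) set" where
  "clifford_leaf m P x = {y \<in> sphere 0 1. pi_C m P y = pi_C m P x}"

definition fkm_leaf :: "nat \<Rightarrow> (nat \<Rightarrow> real^'n^'n) \<Rightarrow> real^'n \<Rightarrow> (real^'n) set" where
  "fkm_leaf m P x = {y \<in> sphere 0 1. cl_norm (pi_C m P y) = cl_norm (pi_C m P x)}"

definition homogeneous_foliation :: "(real^'n \<Rightarrow> (real^'n) set) \<Rightarrow> bool" where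
  "homogeneous_foliation L \<longleftrightarrow>
     (\<exists>G :: (real^'n^'n) set.
        G \<subseteq> Collect rotation_matrix \<and> closed G \<and> connected G \<and>
        mat 1 \<in> G \<and> (\<forall>A\<in>G. \<forall>B\<in>G. A ** B \<in> G) \<and> (\<forall>A\<in>G. matrix_inv A \<in> G) \<and>
        (\<forall>x\<in>sphere 0 1. (\<lambda>A. A *v x) ` G = L x))"

end

theory Submission
  imports Defs
begin

text \<open>
  The group realising the FKM foliation is the identity component \<open>G\<close> of the group of
  rotations preserving \<open>\<parallel>\<pi>\<^sub>C\<parallel>\<close> on the sphere. For \<open>i \<noteq> j\<close> the one-parameter group
  \<open>cos t + sin t P\<^sub>i P\<^sub>j\<close> lies in \<open>G\<close>; it rotates the pair \<open>(\<langle>P\<^sub>i x, x\<rangle>, \<langle>P\<^sub>j x, x\<rangle>)\<close> by the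
  angle \<open>2t\<close> and fixes the other components of \<open>\<pi>\<^sub>C(x)\<close>. Composing such rotations moves every
  unit vector \<open>x\<close> into a normal form with \<open>\<pi>\<^sub>C = \<parallel>\<pi>\<^sub>C(x)\<parallel> P\<^sub>0\<close>; making the \<open>P\<^sub>0\<close>-component
  nonnegative needs a second index, i.e. \<open>m \<ge> 1\<close>. The connected group whose
  orbits are the Clifford leaves lies in \<open>G\<close>, and two points of one FKM leaf, once in normal
  form, lie on a common Clifford leaf; hence the FKM leaves are the \<open>G\<close>-orbits.
\<close>

lemma continuous_on_matrix_vector_mult [continuous_intros]:
  fixes f :: "'a::topological_space \<Rightarrow> real^'n^'m"
  assumes "continuous_on S f" "continuous_on S g"
  shows "continuous_on S (\<lambda>s. f s *v g s)"
  unfolding matrix_vector_mult_def by (intro continuous_intros assms)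

lemma continuous_on_matrix_mult [continuous_intros]:
  fixes f :: "'a::topological_space \<Rightarrow> real^'n^'m" and g :: "'a \<Rightarrow> real^'p^'n"
  assumes "continuous_on S f" "continuous_on S g"
  shows "continuous_on S (\<lambda>s. f s ** g s)"
  unfolding matrix_matrix_mult_def by (intro continuous_intros assms)

lemma continuous_on_transpose [continuous_intros]:
  "continuous_on S f \<Longrightarrow> continuous_on S (\<lambda>s. transpose (f s :: real^'n^'m))"
  unfolding transpose_def by (auto intro!: continuous_intros)

lemma continuous_on_det [continuous_intros]:
  "continuous_on S f \<Longrightarrow> continuous_on S (\<lambda>s. det (f s :: real^'n^'n))"
  unfolding det_def by (auto intro!: continuous_intros)

lemma matrix_mult_uminus_left: "(- A) ** (B::real^'p^'n) = - (A ** B)"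
  by (simp add: matrix_matrix_mult_def vec_eq_iff sum_negf)

lemma matrix_mult_uminus_right: "A ** (- B::real^'p^'n) = - (A ** B)"
  by (simp add: matrix_matrix_mult_def vec_eq_iff sum_negf)

lemma matrix_mult_diff_left: "(A - B) ** (C::real^'p^'n) = A ** C - B ** C"
  by (simp add: matrix_matrix_mult_def vec_eq_iff sum_subtractf algebra_simps)

lemma matrix_mult_add_left: "(A + B) ** (C::real^'p^'n) = A ** C + B ** C"
  by (simp add: matrix_matrix_mult_def vec_eq_iff sum.distrib algebra_simps)

lemma transpose_add: "transpose (A + B) = transpose A + transpose (B::real^'n^'m)"
  by (simp add: transpose_def vec_eq_iff)

lemma norm_orthogonal_matrix_vector_mult:
  "orthogonal_matrix A \<Longrightarrow> norm (A *v x) = norm (x::real^'n)"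
  by (intro orthogonal_transformation_norm)
     (simp add: orthogonal_transformation_matrix matrix_vector_mul_linear)

lemma matrix_inv_orthogonal_matrix:
  fixes A :: "real^'n^'n"
  assumes "orthogonal_matrix A"
  shows "matrix_inv A = transpose A"
proof -
  have inverse: "transpose A ** A = mat 1" "A ** transpose A = mat 1"
    using assms by (auto simp: orthogonal_matrix_def)
  then have "\<exists>B. A ** B = mat 1 \<and> B ** A = mat 1"
    by blast
  then have "matrix_inv A ** A = mat 1"
    unfolding matrix_inv_def by (metis (mono_tags, lifting) someI_ex)
  have "matrix_inv A = matrix_inv A ** (A ** transpose A)"
    using inverse by simp
  also have "\<dots> = (matrix_inv A ** A) ** transpose A"
    by (rule matrix_mul_assoc)
  also have "\<dots> = transpose A"
    using \<open>matrix_inv A ** A = mat 1\<close> by simp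
  finally show ?thesis .
qed

lemma rotation_matrix_mult:
  "rotation_matrix A \<Longrightarrow> rotation_matrix B \<Longrightarrow> rotation_matrix (A ** B :: real^'n^'n)"
  by (simp add: rotation_matrix_def orthogonal_matrix_mul det_mul)

lemma rotation_matrix_transpose:
  "rotation_matrix (transpose A) \<longleftrightarrow> rotation_matrix (A :: real^'n^'n)"
  by (simp add: rotation_matrix_def)

lemma closed_rotation_matrices: "closed {A :: real^'n^'n. rotation_matrix A}"
proof -
  have "{A :: real^'n^'n. rotation_matrix A} = {A. transpose A ** A = mat 1} \<inter> {A. det A = 1}"
    by (auto simp: rotation_matrix_def orthogonal_matrix)
  then show ?thesis
    by (simp only:)
      (intro closed_Int closed_Collect_eq continuous_on_matrix_mult continuous_on_transpose
        continuous_on_det continuous_on_id continuous_on_const)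
qed

lemma connected_component_image_subset:
  assumes "continuous_on (connected_component_set S x) f"
    and "f ` connected_component_set S x \<subseteq> S"
    and "f x \<in> connected_component_set S x"
  shows "f ` connected_component_set S x \<subseteq> connected_component_set S x"
proof -
  let ?C = "connected_component_set S x"
  have "x \<in> ?C"
    using assms(3) by (metis connected_component_eq_empty connected_component_refl_eq empty_iff mem_Collect_eq)
  have "connected (f ` ?C)"
    using assms(1) connected_connected_component by (rule connected_continuous_image)
  moreover have "f ` ?C \<inter> ?C \<noteq> {}"
    using \<open>x \<in> ?C\<close> assms(3) by blast
  ultimately have "connected (f ` ?C \<union> ?C)"
    by (intro connected_Un connected_connected_component)
  moreover have "f ` ?C \<union> ?C \<subseteq> S"
    using assms(2) connected_component_subset by blast
  ultimately have "f ` ?C \<union> ?C \<subseteq> ?C"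
    using \<open>x \<in> ?C\<close> connected_component_maximal[of x "f ` ?C \<union> ?C" S] by blast
  then show ?thesis by blast
qed

lemma sum_atMost_eq_zeroth:
  fixes f :: "nat \<Rightarrow> 'a::comm_monoid_add"
  assumes "\<And>k. 1 \<le> k \<Longrightarrow> k \<le> n \<Longrightarrow> f k = 0"
  shows "(\<Sum>k\<le>n. f k) = f 0"
  using assms by (induction n) auto

lemma polar_nonneg_Ex:
  fixes a b :: real
  shows "\<exists>r \<phi>. 0 \<le> r \<and> a = r * cos \<phi> \<and> b = r * sin \<phi>"
proof -
  obtain r \<phi> where polar: "a = r * cos \<phi>" "b = r * sin \<phi>"
    using polar_Ex[of a b] by blast
  show ?thesis
  proof (cases "0 \<le> r")
    case True
    then show ?thesis using polar by blast
  next
    case False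
    then have "0 \<le> - r" "a = - r * cos (\<phi> + pi)" "b = - r * sin (\<phi> + pi)"
      using polar by simp_all
    then show ?thesis by blast
  qed
qed

definition quad_form :: "real^'n^'n \<Rightarrow> real^'n \<Rightarrow> real" where
  "quad_form M x = (M *v x) \<bullet> x"

lemma quad_form_add: "quad_form (M + N) x = quad_form M x + quad_form N x"
  by (simp add: quad_form_def matrix_vector_mult_add_rdistrib inner_add_left)

lemma quad_form_diff: "quad_form (M - N) x = quad_form M x - quad_form N x"
  by (simp add: quad_form_def matrix_vector_mult_diff_rdistrib inner_diff_left)

lemma quad_form_scaleR: "quad_form (a *\<^sub>R M) x = a * quad_form M x"
  by (simp add: quad_form_def scaleR_matrix_vector_assoc[symmetric])

lemma quad_form_matrix_vector_mult:
  "quad_form M (A *v x) = quad_form (transpose A ** M ** A) x"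
proof -
  have "quad_form (transpose A ** M ** A) x = (transpose A *v ((M ** A) *v x)) \<bullet> x"
    by (simp add: quad_form_def matrix_vector_mul_assoc matrix_mul_assoc)
  also have "\<dots> = ((M ** A) *v x) \<bullet> (A *v x)"
    by (simp only: transpose_matrix_vector dot_lmul_matrix)
  finally show ?thesis
    by (simp add: quad_form_def matrix_vector_mul_assoc inner_commute)
qed

lemma pi_C_eq_sum_quad_form: "pi_C m P x = (\<Sum>i\<le>m. quad_form (P i) x *\<^sub>R P i)"
  by (simp add: pi_C_def quad_form_def)

lemma cl_inner_sum_left:
  "finite I \<Longrightarrow> cl_inner (\<Sum>i\<in>I. f i) B = (\<Sum>i\<in>I. cl_inner (f i) B)"
  by (induction I rule: finite_induct)
     (simp_all add: cl_inner_def matrix_mult_add_left trace_add add_divide_distrib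
       trace_0[unfolded mat_0])

lemma cl_inner_sum_right:
  "finite I \<Longrightarrow> cl_inner B (\<Sum>i\<in>I. f i) = (\<Sum>i\<in>I. cl_inner B (f i))"
  by (induction I rule: finite_induct)
     (simp_all add: cl_inner_def matrix_add_ldistrib trace_add add_divide_distrib
       trace_0[unfolded mat_0])

lemma cl_inner_scaleR_left: "cl_inner (a *\<^sub>R A) B = a * cl_inner A B"
  by (simp add: cl_inner_def scalar_matrix_assoc[symmetric] trace_def sum_distrib_left)

lemma cl_inner_scaleR_right: "cl_inner B (a *\<^sub>R A) = a * cl_inner B A"
  by (simp add: cl_inner_def matrix_scalar_ac scalar_matrix_assoc[symmetric] trace_def
      sum_distrib_left)

lemma transpose_conj_cos_sin_skew:
  fixes J M :: "real^'n^'n"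
  assumes "transpose J = - J"
  shows "transpose (c *\<^sub>R mat 1 + s *\<^sub>R J) ** M ** (c *\<^sub>R mat 1 + s *\<^sub>R J)
     = (c * c) *\<^sub>R M + (c * s) *\<^sub>R (M ** J - J ** M) - (s * s) *\<^sub>R (J ** M ** J)"
proof -
  have transpose: "transpose (c *\<^sub>R mat 1 + s *\<^sub>R J) = c *\<^sub>R mat 1 - s *\<^sub>R J"
    by (simp add: transpose_add transpose_scalar assms)
  show ?thesis
    unfolding transpose by (simp add: matrix_mult_add_left matrix_mult_diff_left matrix_add_ldistrib
        scalar_matrix_assoc[symmetric] matrix_scalar_ac matrix_mul_assoc algebra_simps)
qed

locale clifford_basis =
  fixes m :: nat and P :: "nat \<Rightarrow> real^'n^'n"
  assumes clifford_system: "clifford_system m P"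
begin

lemma symmetric: "i \<le> m \<Longrightarrow> transpose (P i) = P i"
  using clifford_system unfolding clifford_system_def by blast

lemma square: "i \<le> m \<Longrightarrow> P i ** P i = mat 1"
  using clifford_system unfolding clifford_system_def by blast

lemma anticommute: "i \<le> m \<Longrightarrow> j \<le> m \<Longrightarrow> i \<noteq> j \<Longrightarrow> P i ** P j = - (P j ** P i)"
  using clifford_system unfolding clifford_system_def by blast

lemma orthonormal: "i \<le> m \<Longrightarrow> j \<le> m \<Longrightarrow> cl_inner (P i) (P j) = (if i = j then 1 else 0)"
  using clifford_system unfolding clifford_system_def by blast

lemma cl_inner_pi_C:
  assumes "i \<le> m"
  shows "cl_inner (P i) (pi_C m P x) = quad_form (P i) x"
proof -
  have "cl_inner (P i) (pi_C m P x) = (\<Sum>j\<le>m. quad_form (P j) x * cl_inner (P i) (P j))"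
    by (simp add: pi_C_eq_sum_quad_form cl_inner_sum_right cl_inner_scaleR_right)
  also have "\<dots> = (\<Sum>j\<le>m. if j = i then quad_form (P i) x else 0)"
    using assms by (intro sum.cong) (auto simp: orthonormal)
  also have "\<dots> = quad_form (P i) x"
    using assms by simp
  finally show ?thesis .
qed

lemma cl_norm_pi_C: "cl_norm (pi_C m P x) = sqrt (\<Sum>i\<le>m. (quad_form (P i) x)\<^sup>2)"
proof -
  have "cl_inner (pi_C m P x) (pi_C m P x)
      = (\<Sum>i\<le>m. quad_form (P i) x * cl_inner (P i) (pi_C m P x))"
    unfolding pi_C_eq_sum_quad_form[of m P x]
    by (simp only: cl_inner_sum_left finite_atMost cl_inner_scaleR_left)
  also have "\<dots> = (\<Sum>i\<le>m. (quad_form (P i) x)\<^sup>2)"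
    by (intro sum.cong) (simp_all add: cl_inner_pi_C power2_eq_square)
  finally show ?thesis
    by (simp add: cl_norm_def)
qed

text \<open>The generator \<open>P i ** P j\<close> of \<open>rot i j\<close> (\<open>i \<noteq> j\<close>) is skew-symmetric with square \<open>-1\<close>, so
  \<open>rot i j\<close> is a one-parameter group of rotations.\<close>

definition rot :: "nat \<Rightarrow> nat \<Rightarrow> real \<Rightarrow> real^'n^'n" where
  "rot i j t = cos t *\<^sub>R mat 1 + sin t *\<^sub>R (P i ** P j)"

lemma rot_zero: "rot i j 0 = mat 1"
  by (simp add: rot_def)

lemma continuous_on_rot: "continuous_on S (rot i j)"
  unfolding rot_def by (intro continuous_intros)

context
  fixes i j :: nat
  assumes i: "i \<le> m" and j: "j \<le> m" and i_ne_j: "i \<noteq> j"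
begin

lemma transpose_generator: "transpose (P i ** P j) = - (P i ** P j)"
  using i j i_ne_j by (simp add: matrix_transpose_mul symmetric anticommute[of j i])

lemma anticommute_second_first: "P j ** P i = - (P i ** P j)"
  using i j i_ne_j by (simp add: anticommute[of j i])

lemma first_mult_generator: "P i ** (P i ** P j) = P j"
  by (simp only: matrix_mul_assoc square[OF i] matrix_mul_lid)

lemma generator_mult_second: "(P i ** P j) ** P j = P i"
  by (simp only: matrix_mul_assoc[symmetric] square[OF j] matrix_mul_rid)

lemma generator_mult_first: "(P i ** P j) ** P i = - P j"
proof -
  have "(P i ** P j) ** P i = P i ** (P j ** P i)"
    by (simp only: matrix_mul_assoc)
  also have "\<dots> = - P j"
    by (simp only: anticommute_second_first matrix_mult_uminus_right first_mult_generator)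
  finally show ?thesis .
qed

lemma second_mult_generator: "P j ** (P i ** P j) = - P i"
proof -
  have "P j ** (P i ** P j) = (P j ** P i) ** P j"
    by (simp only: matrix_mul_assoc)
  also have "\<dots> = - P i"
    by (simp only: anticommute_second_first matrix_mult_uminus_left generator_mult_second)
  finally show ?thesis .
qed

lemma generator_square: "(P i ** P j) ** (P i ** P j) = - mat 1"
proof -
  have "(P i ** P j) ** (P i ** P j) = P i ** (P j ** (P i ** P j))"
    by (simp only: matrix_mul_assoc)
  also have "\<dots> = - mat 1"
    by (simp only: second_mult_generator matrix_mult_uminus_right square[OF i])
  finally show ?thesis .
qed

lemma other_mult_generator:
  assumes "k \<le> m" "k \<noteq> i" "k \<noteq> j"
  shows "P k ** (P i ** P j) = (P i ** P j) ** P k"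
proof -
  have "P k ** (P i ** P j) = (P k ** P i) ** P j"
    by (simp only: matrix_mul_assoc)
  also have "\<dots> = P i ** (P j ** P k)"
    using assms i j
    by (simp only: anticommute matrix_mult_uminus_left matrix_mult_uminus_right
        matrix_mul_assoc minus_minus)
  also have "\<dots> = (P i ** P j) ** P k"
    by (simp only: matrix_mul_assoc)
  finally show ?thesis .
qed

lemma transpose_rot_conj_first:
  "transpose (rot i j t) ** P i ** rot i j t = cos (2 * t) *\<^sub>R P i + sin (2 * t) *\<^sub>R P j"
proof -
  have "(P i ** P j) ** P i ** (P i ** P j) = (P i ** P j) ** (P i ** (P i ** P j))"
    by (simp only: matrix_mul_assoc)
  also have "\<dots> = P i"
    by (simp only: first_mult_generator generator_mult_second)
  finally have sandwich: "(P i ** P j) ** P i ** (P i ** P j) = P i" .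
  show ?thesis
    unfolding rot_def transpose_conj_cos_sin_skew[OF transpose_generator] sandwich
    unfolding first_mult_generator generator_mult_first cos_double sin_double
    by (simp add: vec_eq_iff power2_eq_square algebra_simps)
qed

lemma transpose_rot_conj_second:
  "transpose (rot i j t) ** P j ** rot i j t = cos (2 * t) *\<^sub>R P j - sin (2 * t) *\<^sub>R P i"
proof -
  have sandwich: "(P i ** P j) ** P j ** (P i ** P j) = P j"
    by (simp only: generator_mult_second first_mult_generator)
  show ?thesis
    unfolding rot_def transpose_conj_cos_sin_skew[OF transpose_generator] sandwich
    unfolding second_mult_generator generator_mult_second cos_double sin_double
    by (simp add: vec_eq_iff power2_eq_square algebra_simps)
qed

lemma transpose_rot_conj_other:
  assumes "k \<le> m" "k \<noteq> i" "k \<noteq> j"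
  shows "transpose (rot i j t) ** P k ** rot i j t = P k"
proof -
  have "(P i ** P j) ** P k ** (P i ** P j) = (P i ** P j) ** (P k ** (P i ** P j))"
    by (simp only: matrix_mul_assoc)
  also have "\<dots> = ((P i ** P j) ** (P i ** P j)) ** P k"
    unfolding other_mult_generator[OF assms] by (rule matrix_mul_assoc)
  also have "\<dots> = - P k"
    by (simp only: generator_square matrix_mult_uminus_left matrix_mul_lid)
  finally have sandwich: "(P i ** P j) ** P k ** (P i ** P j) = - P k" .
  show ?thesis
    unfolding rot_def transpose_conj_cos_sin_skew[OF transpose_generator] sandwich
    unfolding other_mult_generator[OF assms]
    by (simp add: scaleR_left_distrib[symmetric])
qed

lemma orthogonal_matrix_rot: "orthogonal_matrix (rot i j t)"
proof -
  have "transpose (rot i j t) ** rot i j t = transpose (rot i j t) ** mat 1 ** rot i j t"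
    by simp
  also have "\<dots> = mat 1"
    unfolding rot_def transpose_conj_cos_sin_skew[OF transpose_generator]
    by (simp add: generator_square scaleR_left_distrib[symmetric] sin_cos_squared_add3)
  finally show ?thesis
    by (simp add: orthogonal_matrix)
qed

lemma rot_double: "rot i j (2 * u) = rot i j u ** rot i j u"
proof -
  have "rot i j u ** rot i j u = (cos u * cos u) *\<^sub>R mat 1 + (2 * cos u * sin u) *\<^sub>R (P i ** P j)
      + (sin u * sin u) *\<^sub>R ((P i ** P j) ** (P i ** P j))"
    unfolding rot_def
    by (simp add: matrix_add_ldistrib matrix_mult_add_left matrix_scalar_ac
        scalar_matrix_assoc[symmetric] scaleR_add_left[symmetric] algebra_simps)
       \<comment> \<open>the simplifier turns \<open>A + A\<close> into the entrywise product \<open>2 * A\<close>\<close>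
       (simp add: vec_eq_iff)
  also have "\<dots> = rot i j (2 * u)"
    unfolding rot_def generator_square cos_double sin_double
    by (simp add: power2_eq_square algebra_simps)
  finally show ?thesis ..
qed

lemma rotation_matrix_rot: "rotation_matrix (rot i j t)"
proof -
  have "det (rot i j t) = det (rot i j (t / 2)) * det (rot i j (t / 2))"
    using rot_double[of "t / 2"] by (simp add: det_mul)
  moreover have "det (rot i j (t / 2)) = 1 \<or> det (rot i j (t / 2)) = -1"
    by (rule det_orthogonal_matrix[OF orthogonal_matrix_rot])
  ultimately show ?thesis
    using orthogonal_matrix_rot by (auto simp: rotation_matrix_def)
qed

lemma quad_form_first_rot:
  "quad_form (P i) (rot i j t *v x)
     = cos (2 * t) * quad_form (P i) x + sin (2 * t) * quad_form (P j) x"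
  by (simp add: quad_form_matrix_vector_mult transpose_rot_conj_first quad_form_add
      quad_form_scaleR)

lemma quad_form_second_rot:
  "quad_form (P j) (rot i j t *v x)
     = cos (2 * t) * quad_form (P j) x - sin (2 * t) * quad_form (P i) x"
  by (simp add: quad_form_matrix_vector_mult transpose_rot_conj_second quad_form_diff
      quad_form_scaleR)

lemma quad_form_other_rot:
  "k \<le> m \<Longrightarrow> k \<noteq> i \<Longrightarrow> k \<noteq> j \<Longrightarrow> quad_form (P k) (rot i j t *v x) = quad_form (P k) x"
  by (simp add: quad_form_matrix_vector_mult transpose_rot_conj_other)

lemma cl_norm_pi_C_rot: "cl_norm (pi_C m P (rot i j t *v x)) = cl_norm (pi_C m P x)"
proof -
  have split: "(\<Sum>k\<le>m. f k) = f i + f j + (\<Sum>k\<in>{..m} - {i} - {j}. f k)" for f :: "nat \<Rightarrow> real"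
    using i j i_ne_j by (simp add: sum.remove[of "{..m}" i] sum.remove[of "{..m} - {i}" j])
  have rotation_invariant: "(c * a + s * b)\<^sup>2 + (c * b - s * a)\<^sup>2 = (c\<^sup>2 + s\<^sup>2) * (a\<^sup>2 + b\<^sup>2)"
    for a b c s :: real
    by algebra
  have "(\<Sum>k\<in>{..m} - {i} - {j}. (quad_form (P k) (rot i j t *v x))\<^sup>2)
      = (\<Sum>k\<in>{..m} - {i} - {j}. (quad_form (P k) x)\<^sup>2)"
    by (intro sum.cong) (auto simp: quad_form_other_rot)
  moreover have "(quad_form (P i) (rot i j t *v x))\<^sup>2 + (quad_form (P j) (rot i j t *v x))\<^sup>2
      = (quad_form (P i) x)\<^sup>2 + (quad_form (P j) x)\<^sup>2"
    unfolding quad_form_first_rot quad_form_second_rot rotation_invariant by simp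
  ultimately show ?thesis
    unfolding cl_norm_pi_C split[of "\<lambda>k. (quad_form (P k) _)\<^sup>2"] by simp
qed

end

definition fkm_stabilizer :: "(real^'n^'n) set" where
  "fkm_stabilizer = {A. rotation_matrix A \<and>
     (\<forall>x\<in>sphere 0 1. cl_norm (pi_C m P (A *v x)) = cl_norm (pi_C m P x))}"

lemma closed_fkm_stabilizer: "closed fkm_stabilizer"
proof -
  have stabilizer: "fkm_stabilizer = {A. rotation_matrix A} \<inter>
      (\<Inter>x\<in>sphere 0 1. {A. sqrt (\<Sum>i\<le>m. (quad_form (P i) (A *v x))\<^sup>2) = cl_norm (pi_C m P x)})"
    unfolding fkm_stabilizer_def cl_norm_pi_C by auto
  have continuity: "continuous_on UNIV (\<lambda>A. sqrt (\<Sum>i\<le>m. (quad_form (P i) (A *v x))\<^sup>2))" for x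
    unfolding quad_form_def by (intro continuous_intros)
  show ?thesis
    unfolding stabilizer
    by (intro closed_Int closed_INT ballI closed_Collect_eq closed_rotation_matrices
        continuous_on_const continuity)
qed

lemma mat_1_in_fkm_stabilizer: "mat 1 \<in> fkm_stabilizer"
  by (simp add: fkm_stabilizer_def rotation_matrix_def orthogonal_matrix_id)

lemma fkm_stabilizer_sphere: "A \<in> fkm_stabilizer \<Longrightarrow> x \<in> sphere 0 1 \<Longrightarrow> A *v x \<in> sphere 0 1"
  by (simp add: fkm_stabilizer_def rotation_matrix_def norm_orthogonal_matrix_vector_mult)

lemma fkm_stabilizer_mult:
  assumes "A \<in> fkm_stabilizer" "B \<in> fkm_stabilizer"
  shows "A ** B \<in> fkm_stabilizer"
proof -
  have "cl_norm (pi_C m P ((A ** B) *v x)) = cl_norm (pi_C m P x)" if "x \<in> sphere 0 1" for x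
    using assms that fkm_stabilizer_sphere[OF assms(2) that]
    by (simp add: fkm_stabilizer_def flip: matrix_vector_mul_assoc)
  then show ?thesis
    using assms by (simp add: fkm_stabilizer_def rotation_matrix_mult)
qed

lemma fkm_stabilizer_transpose:
  assumes "A \<in> fkm_stabilizer"
  shows "transpose A \<in> fkm_stabilizer"
proof -
  have A: "rotation_matrix A" "A ** transpose A = mat 1"
    using assms by (auto simp: fkm_stabilizer_def rotation_matrix_def orthogonal_matrix_def)
  have "cl_norm (pi_C m P (transpose A *v x)) = cl_norm (pi_C m P x)" if "x \<in> sphere 0 1" for x
  proof -
    have "transpose A *v x \<in> sphere 0 1"
      using that A(1) norm_orthogonal_matrix_vector_mult[of "transpose A" x]
      by (simp add: rotation_matrix_def del: transpose_matrix_vector)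
    then have "cl_norm (pi_C m P (A *v (transpose A *v x))) = cl_norm (pi_C m P (transpose A *v x))"
      using assms by (simp add: fkm_stabilizer_def del: transpose_matrix_vector)
    then show ?thesis
      by (simp only: matrix_vector_mul_assoc A(2) matrix_vector_mul_lid)
  qed
  then show ?thesis
    using A(1) by (simp add: fkm_stabilizer_def rotation_matrix_transpose del: transpose_matrix_vector)
qed

lemma rot_in_fkm_stabilizer: "i \<le> m \<Longrightarrow> j \<le> m \<Longrightarrow> i \<noteq> j \<Longrightarrow> rot i j t \<in> fkm_stabilizer"
  by (simp add: fkm_stabilizer_def rotation_matrix_rot cl_norm_pi_C_rot)

text \<open>The stabilizer itself need not be connected, whereas homogeneity asks for a connected group.\<close>

definition fkm_group :: "(real^'n^'n) set" where
  "fkm_group = connected_component_set fkm_stabilizer (mat 1)"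

lemma fkm_group_subset_fkm_stabilizer: "fkm_group \<subseteq> fkm_stabilizer"
  by (simp add: fkm_group_def connected_component_subset)

lemma mat_1_in_fkm_group: "mat 1 \<in> fkm_group"
  by (simp add: fkm_group_def mat_1_in_fkm_stabilizer)

lemma closed_fkm_group: "closed fkm_group"
  by (simp add: fkm_group_def closed_connected_component closed_fkm_stabilizer)

lemma connected_fkm_group: "connected fkm_group"
  by (simp add: fkm_group_def)

lemma fkm_group_mult:
  assumes "A \<in> fkm_group" "B \<in> fkm_group"
  shows "A ** B \<in> fkm_group"
proof -
  have "(\<lambda>B. A ** B) ` fkm_group \<subseteq> fkm_group"
    unfolding fkm_group_def
  proof (rule connected_component_image_subset)
    show "continuous_on (connected_component_set fkm_stabilizer (mat 1)) ((**) A)"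
      by (intro continuous_intros)
    show "(**) A ` connected_component_set fkm_stabilizer (mat 1) \<subseteq> fkm_stabilizer"
      using assms(1) fkm_group_subset_fkm_stabilizer fkm_stabilizer_mult
      by (auto simp: fkm_group_def)
    show "A ** mat 1 \<in> connected_component_set fkm_stabilizer (mat 1)"
      using assms(1) by (simp add: fkm_group_def)
  qed
  then show ?thesis
    using assms(2) by blast
qed

lemma fkm_group_transpose:
  assumes "A \<in> fkm_group"
  shows "transpose A \<in> fkm_group"
proof -
  have "transpose ` fkm_group \<subseteq> fkm_group"
    unfolding fkm_group_def
    using fkm_group_subset_fkm_stabilizer fkm_stabilizer_transpose mat_1_in_fkm_stabilizer
    by (intro connected_component_image_subset continuous_on_transpose continuous_on_id)
      (auto simp: fkm_group_def)
  then show ?thesis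
    using assms by blast
qed

lemma rot_in_fkm_group:
  assumes "i \<le> m" "j \<le> m" "i \<noteq> j"
  shows "rot i j t \<in> fkm_group"
proof -
  have "mat 1 \<in> range (rot i j)"
    using rot_zero by (metis rangeI)
  then have "range (rot i j) \<subseteq> fkm_group"
    unfolding fkm_group_def
    using assms rot_in_fkm_stabilizer
    by (intro connected_component_maximal connected_continuous_image continuous_on_rot) auto
  then show ?thesis
    by blast
qed

lemma fkm_group_rotation_matrix: "fkm_group \<subseteq> Collect rotation_matrix"
  using fkm_group_subset_fkm_stabilizer by (auto simp: fkm_stabilizer_def)

lemma fkm_group_matrix_inv:
  assumes "A \<in> fkm_group"
  shows "matrix_inv A \<in> fkm_group"
proof -
  have "matrix_inv A = transpose A"
    using assms fkm_group_rotation_matrix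
    by (auto simp: rotation_matrix_def matrix_inv_orthogonal_matrix)
  then show ?thesis
    using assms by (simp add: fkm_group_transpose)
qed

lemma clifford_orbit_group_subset_fkm_group:
  assumes "G \<subseteq> Collect rotation_matrix" "connected G" "mat 1 \<in> G"
    and clifford_orbits: "\<forall>x\<in>sphere 0 1. (\<lambda>A. A *v x) ` G = clifford_leaf m P x"
  shows "G \<subseteq> fkm_group"
proof -
  have "G \<subseteq> fkm_stabilizer"
  proof
    fix A
    assume "A \<in> G"
    have "A *v x \<in> clifford_leaf m P x" if "x \<in> sphere 0 1" for x
      using clifford_orbits that \<open>A \<in> G\<close> by blast
    then have "pi_C m P (A *v x) = pi_C m P x" if "x \<in> sphere 0 1" for x
      using that by (simp add: clifford_leaf_def)
    then show "A \<in> fkm_stabilizer"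
      using \<open>A \<in> G\<close> assms(1) by (auto simp: fkm_stabilizer_def)
  qed
  then show ?thesis
    unfolding fkm_group_def by (rule connected_component_maximal[OF assms(3,2)])
qed

lemma exists_fkm_group_clear_component:
  assumes "1 \<le> j" "j \<le> m"
  shows "\<exists>Q\<in>fkm_group. 0 \<le> quad_form (P 0) (Q *v w) \<and> quad_form (P j) (Q *v w) = 0 \<and>
    (\<forall>k\<le>m. k \<noteq> 0 \<and> k \<noteq> j \<longrightarrow> quad_form (P k) (Q *v w) = quad_form (P k) w)"
proof -
  obtain r \<phi> where r: "0 \<le> r"
    and polar: "quad_form (P 0) w = r * cos \<phi>" "quad_form (P j) w = r * sin \<phi>"
    using polar_nonneg_Ex by blast
  let ?Q = "rot 0 j (\<phi> / 2)"
  have "quad_form (P 0) (?Q *v w) = r"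
    using assms
    by (simp add: quad_form_first_rot polar mult.commute mult.left_commute flip: distrib_left)
  moreover have "quad_form (P j) (?Q *v w) = 0"
    using assms by (simp add: quad_form_second_rot polar)
  moreover have "quad_form (P k) (?Q *v w) = quad_form (P k) w" if "k \<le> m" "k \<noteq> 0" "k \<noteq> j" for k
    using assms that by (simp add: quad_form_other_rot)
  moreover have "?Q \<in> fkm_group"
    using assms by (simp add: rot_in_fkm_group)
  ultimately show ?thesis
    using r by blast
qed

lemma exists_fkm_group_clear_components:
  assumes "1 \<le> m" "n \<le> m"
  shows "\<exists>R\<in>fkm_group. 0 \<le> quad_form (P 0) (R *v z) \<and>
    (\<forall>k. 1 \<le> k \<and> k \<le> n \<longrightarrow> quad_form (P k) (R *v z) = 0)"
  using assms(2)
proof (induction n)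
  case 0
  obtain Q where "Q \<in> fkm_group" "0 \<le> quad_form (P 0) (Q *v z)"
    using exists_fkm_group_clear_component[OF order.refl assms(1)] by blast
  then show ?case
    by auto
next
  case (Suc n)
  then obtain R where R: "R \<in> fkm_group" "0 \<le> quad_form (P 0) (R *v z)"
    "\<forall>k. 1 \<le> k \<and> k \<le> n \<longrightarrow> quad_form (P k) (R *v z) = 0"
    using Suc_leD by blast
  obtain Q where Q: "Q \<in> fkm_group" "0 \<le> quad_form (P 0) (Q *v (R *v z))"
    "quad_form (P (Suc n)) (Q *v (R *v z)) = 0"
    "\<forall>k\<le>m. k \<noteq> 0 \<and> k \<noteq> Suc n \<longrightarrow> quad_form (P k) (Q *v (R *v z)) = quad_form (P k) (R *v z)"
    using exists_fkm_group_clear_component[OF _ Suc.prems, of "R *v z"] by auto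
  have "quad_form (P k) (Q *v (R *v z)) = 0" if "1 \<le> k" "k \<le> Suc n" for k
  proof (cases "k = Suc n")
    case True
    then show ?thesis using Q(3) by simp
  next
    case False
    then show ?thesis using Q(4) R(3) that Suc.prems by simp
  qed
  then show ?case
    using fkm_group_mult[OF Q(1) R(1)] Q(2) unfolding matrix_vector_mul_assoc by blast
qed

lemma exists_fkm_group_normal_form:
  assumes "1 \<le> m" "z \<in> sphere 0 1"
  shows "\<exists>R\<in>fkm_group. pi_C m P (R *v z) = cl_norm (pi_C m P z) *\<^sub>R P 0"
proof -
  obtain R where R: "R \<in> fkm_group" "0 \<le> quad_form (P 0) (R *v z)"
    and cleared: "\<forall>k. 1 \<le> k \<and> k \<le> m \<longrightarrow> quad_form (P k) (R *v z) = 0"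
    using exists_fkm_group_clear_components[OF assms(1) order.refl] by blast
  have "cl_norm (pi_C m P z) = cl_norm (pi_C m P (R *v z))"
    using R(1) assms(2) fkm_group_subset_fkm_stabilizer by (auto simp: fkm_stabilizer_def)
  also have "\<dots> = quad_form (P 0) (R *v z)"
    using R(2) cleared by (simp add: cl_norm_pi_C sum_atMost_eq_zeroth)
  finally have "pi_C m P (R *v z) = cl_norm (pi_C m P z) *\<^sub>R P 0"
    using cleared by (simp add: pi_C_eq_sum_quad_form[of m P "R *v z"] sum_atMost_eq_zeroth)
  then show ?thesis
    using R(1) by blast
qed

lemma fkm_leaf_eq_orbit:
  assumes "1 \<le> m" and "G \<subseteq> fkm_group"
    and clifford_orbits: "\<forall>x\<in>sphere 0 1. (\<lambda>A. A *v x) ` G = clifford_leaf m P x"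
    and x: "x \<in> sphere 0 1"
  shows "(\<lambda>A. A *v x) ` fkm_group = fkm_leaf m P x"
proof
  show "(\<lambda>A. A *v x) ` fkm_group \<subseteq> fkm_leaf m P x"
    using x fkm_group_subset_fkm_stabilizer fkm_stabilizer_sphere
    by (auto simp: fkm_leaf_def fkm_stabilizer_def)
next
  show "fkm_leaf m P x \<subseteq> (\<lambda>A. A *v x) ` fkm_group"
  proof
    fix y
    assume "y \<in> fkm_leaf m P x"
    then have y: "y \<in> sphere 0 1" and same_norm: "cl_norm (pi_C m P y) = cl_norm (pi_C m P x)"
      by (auto simp: fkm_leaf_def)
    obtain R1 where R1: "R1 \<in> fkm_group" "pi_C m P (R1 *v x) = cl_norm (pi_C m P x) *\<^sub>R P 0"
      using exists_fkm_group_normal_form[OF assms(1) x] by blast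
    obtain R2 where R2: "R2 \<in> fkm_group" "pi_C m P (R2 *v y) = cl_norm (pi_C m P y) *\<^sub>R P 0"
      using exists_fkm_group_normal_form[OF assms(1) y] by blast
    have R1x: "R1 *v x \<in> sphere 0 1" and R2y: "R2 *v y \<in> sphere 0 1"
      using R1(1) R2(1) x y fkm_group_subset_fkm_stabilizer fkm_stabilizer_sphere by auto
    then have "R2 *v y \<in> clifford_leaf m P (R1 *v x)"
      using R1(2) R2(2) same_norm by (simp add: clifford_leaf_def)
    moreover have "clifford_leaf m P (R1 *v x) = (\<lambda>A. A *v (R1 *v x)) ` G"
      using clifford_orbits R1x by simp
    ultimately obtain g where g: "g \<in> G" "R2 *v y = g *v (R1 *v x)"
      by auto
    have "transpose R2 ** R2 = mat 1"
      using R2(1) fkm_group_subset_fkm_stabilizer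
      by (auto simp: fkm_stabilizer_def rotation_matrix_def orthogonal_matrix)
    then have "y = transpose R2 *v (R2 *v y)"
      by (simp only: matrix_vector_mul_assoc matrix_vector_mul_lid)
    also have "\<dots> = (transpose R2 ** g ** R1) *v x"
      by (simp only: g(2) matrix_vector_mul_assoc matrix_mul_assoc)
    finally have "y = (transpose R2 ** g ** R1) *v x" .
    moreover have "transpose R2 ** g ** R1 \<in> fkm_group"
      using g(1) assms(2) R1(1) R2(1) by (intro fkm_group_mult fkm_group_transpose) auto
    ultimately show "y \<in> (\<lambda>A. A *v x) ` fkm_group"
      by (rule image_eqI)
  qed
qed

end

theorem proposition5p1:
  fixes m l :: nat and P :: "nat \<Rightarrow> real^'n^'n"
  assumes "m \<ge> 1"
    and "CARD('n) = 2 * l"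
    and "l > m + 1"
    and "clifford_system m P"
    and "homogeneous_foliation (clifford_leaf m P)"
  shows "homogeneous_foliation (fkm_leaf m P)"
proof -
  interpret clifford_basis m P
    using assms(4) by unfold_locales
  obtain G :: "(real^'n^'n) set"
    where G: "G \<subseteq> Collect rotation_matrix" "connected G" "mat 1 \<in> G"
      "\<forall>x\<in>sphere 0 1. (\<lambda>A. A *v x) ` G = clifford_leaf m P x"
    using assms(5) unfolding homogeneous_foliation_def by blast
  then have "G \<subseteq> fkm_group"
    by (rule clifford_orbit_group_subset_fkm_group)
  then show ?thesis
    unfolding homogeneous_foliation_def
    by (intro exI[of _ fkm_group] conjI ballI fkm_group_rotation_matrix closed_fkm_group
        connected_fkm_group mat_1_in_fkm_group fkm_group_mult fkm_group_matrix_inv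
        fkm_leaf_eq_orbit[OF assms(1) _ G(4)])
qed

end
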